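(* For every $I\subset\{1,\dots,g\}$, the element $\phi(\theta_I^2)\in\mathrm{Hom}(H,\mathfrak{p}(3))$ lies in $\mathrm{Der}_2\mathfrak{p}$.
   Context: $H$ is a $2g$-dimensional $\mathbb{Q}$-vector space with symplectic basis $a_1,b_1,\dots,a_g,b_g$ and symplectic form $\theta$, also viewed as $\theta=\sum_i a_i\wedge b_i$; $\theta_I=\sum_{i\in I}a_i\wedge b_i$. $\mathfrak{p}=\bigoplus_m\mathfrak{p}(m)$ is the graded Lie algebra $\mathbb{L}(H)/(\sum_i[a_i,b_i])$, $\mathbb{L}(H)$ the free Lie algebra on $H$ graded by bracket length. $\phi:\mathrm{Sym}^2\Lambda^2H\to\mathrm{Hom}(H,\mathfrak{p}(3))$ sends $(u_1\wedge v_1)(u_2\wedge v_2)$ to $x\mapsto \theta(u_1,x)[v_1,[u_2,v_2]]-\theta(v_1,x)[u_1,[u_2,v_2]]+\theta(u_2,x)[v_2,[u_1,v_1]]-\theta(v_2,x)[u_2,[u_1,v_1]]$. $\mathrm{Der}_n\mathfrak{p}\subset\mathrm{Hom}(\mathfrak{p}(1),\mathfrak{p}(n+1))$ is the space of homomorphisms that extend to a derivation of $\mathfrak{p}$ of degree $n$, i.e. the kernel of the map $\mathrm{Hom}(\mathfrak{p}(1),\mathfrak{p}(n+1))\to\mathfrak{p}(n+2)$ sending $\psi$ to $\sum_i([\psi(a_i),b_i]+[a_i,\psi(b_i)])$. *)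

theory Defs
  imports Complex_Main "HOL-Library.Function_Algebras"
begin

text \<open>Model: the tensor algebra T(H) over Q on generators a_i = (i,False), b_i = (i,True),
  realised as noncommutative (formal) polynomials: functions from words to rationals.\<close>

type_synonym gen = "nat \<times> bool"
type_synonym ncpoly = "gen list \<Rightarrow> rat"

definition ncmul :: "ncpoly \<Rightarrow> ncpoly \<Rightarrow> ncpoly" where
  "ncmul p q = (\<lambda>w. \<Sum>k\<le>length w. p (take k w) * q (drop k w))"

definition bracket :: "ncpoly \<Rightarrow> ncpoly \<Rightarrow> ncpoly" where
  "bracket p q = ncmul p q - ncmul q p"

definition smul :: "rat \<Rightarrow> ncpoly \<Rightarrow> ncpoly" where
  "smul c p = (\<lambda>w. c * p w)"

definition gen_el :: "gen \<Rightarrow> ncpoly" where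
  "gen_el x = (\<lambda>w. if w = [x] then 1 else 0)"

definition a_el :: "nat \<Rightarrow> ncpoly" where "a_el i = gen_el (i, False)"
definition b_el :: "nat \<Rightarrow> ncpoly" where "b_el i = gen_el (i, True)"

definition homog :: "nat \<Rightarrow> ncpoly \<Rightarrow> bool" where
  "homog m p \<longleftrightarrow> (\<forall>w. length w \<noteq> m \<longrightarrow> p w = 0)"

definition theta :: "nat \<Rightarrow> ncpoly \<Rightarrow> ncpoly \<Rightarrow> rat" where
  "theta g p q = (\<Sum>i\<in>{1..g}. p [(i,False)] * q [(i,True)] - p [(i,True)] * q [(i,False)])"

inductive_set free_lie :: "nat \<Rightarrow> ncpoly set" for g :: nat where
  gen: "i \<in> {1..g} \<Longrightarrow> gen_el (i, e) \<in> free_lie g"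
| zero: "0 \<in> free_lie g"
| add: "p \<in> free_lie g \<Longrightarrow> q \<in> free_lie g \<Longrightarrow> p + q \<in> free_lie g"
| smul: "p \<in> free_lie g \<Longrightarrow> smul c p \<in> free_lie g"
| brk: "p \<in> free_lie g \<Longrightarrow> q \<in> free_lie g \<Longrightarrow> bracket p q \<in> free_lie g"

definition omega :: "nat \<Rightarrow> ncpoly" where
  "omega g = (\<Sum>i\<in>{1..g}. bracket (a_el i) (b_el i))"

text \<open>Lie ideal of L(H) generated by omega; p = L(H)/this ideal.\<close>
inductive_set lie_ideal :: "nat \<Rightarrow> ncpoly set" for g :: nat where
  gen: "omega g \<in> lie_ideal g"
| zero: "0 \<in> lie_ideal g"
| add: "p \<in> lie_ideal g \<Longrightarrow> q \<in> lie_ideal g \<Longrightarrow> p + q \<in> lie_ideal g"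
| smul: "p \<in> lie_ideal g \<Longrightarrow> smul c p \<in> lie_ideal g"
| brk: "x \<in> free_lie g \<Longrightarrow> u \<in> lie_ideal g \<Longrightarrow> bracket x u \<in> lie_ideal g"

text \<open>phi on a product (u1 ^ v1)(u2 ^ v2), evaluated at x.\<close>
definition phi_gen :: "nat \<Rightarrow> ncpoly \<Rightarrow> ncpoly \<Rightarrow> ncpoly \<Rightarrow> ncpoly \<Rightarrow> ncpoly \<Rightarrow> ncpoly" where
  "phi_gen g u1 v1 u2 v2 x =
     smul (theta g u1 x) (bracket v1 (bracket u2 v2))
   - smul (theta g v1 x) (bracket u1 (bracket u2 v2))
   + smul (theta g u2 x) (bracket v2 (bracket u1 v1))
   - smul (theta g v2 x) (bracket u2 (bracket u1 v1))"

text \<open>phi(theta_I^2), theta_I^2 = sum over i,j in I of (a_i ^ b_i)(a_j ^ b_j), phi linear.\<close>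
definition phi_thetaI_sq :: "nat \<Rightarrow> nat set \<Rightarrow> ncpoly \<Rightarrow> ncpoly" where
  "phi_thetaI_sq g I x = (\<Sum>i\<in>I. \<Sum>j\<in>I. phi_gen g (a_el i) (b_el i) (a_el j) (b_el j) x)"

text \<open>Der_n p: a homomorphism p(1) -> p(n+1) (given by its values on the basis, with
  representatives in L(H) of degree n+1) whose derivation obstruction vanishes in p(n+2).\<close>
definition in_Der :: "nat \<Rightarrow> nat \<Rightarrow> (ncpoly \<Rightarrow> ncpoly) \<Rightarrow> bool" where
  "in_Der g n \<psi> \<longleftrightarrow>
     (\<forall>i\<in>{1..g}. \<psi> (a_el i) \<in> free_lie g \<and> homog (n+1) (\<psi> (a_el i))
                \<and> \<psi> (b_el i) \<in> free_lie g \<and> homog (n+1) (\<psi> (b_el i)))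
   \<and> (\<Sum>i\<in>{1..g}. bracket (\<psi> (a_el i)) (b_el i) + bracket (a_el i) (\<psi> (b_el i))) \<in> lie_ideal g"

end

theory Submission
  imports Defs
begin

text \<open>Write \<open>\<omega>\<^sub>I = \<Sum>\<^sub>i\<^sub>\<in>\<^sub>I [a\<^sub>i, b\<^sub>i]\<close>. Since \<open>\<theta>(a\<^sub>i, b\<^sub>k) = \<delta>\<^sub>i\<^sub>k\<close>, the map \<open>\<phi>(\<theta>\<^sub>I\<^sup>2)\<close> sends a generator
  \<open>x \<in> {a\<^sub>k, b\<^sub>k}\<close> to \<open>2[x, \<omega>\<^sub>I]\<close> if \<open>k \<in> I\<close> and to \<open>0\<close> otherwise. By the Jacobi identity the
  derivation obstruction \<open>\<Sum>\<^sub>k [\<psi> a\<^sub>k, b\<^sub>k] + [a\<^sub>k, \<psi> b\<^sub>k]\<close> becomes \<open>2 \<Sum>\<^sub>k\<^sub>\<in>\<^sub>I [[a\<^sub>k, b\<^sub>k], \<omega>\<^sub>I] = 2[\<omega>\<^sub>I, \<omega>\<^sub>I]\<close>,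
  which vanishes already in the free Lie algebra.\<close>

lemma ncmul_assoc: "ncmul (ncmul p q) r = ncmul p (ncmul q r)"
proof
  fix w :: "gen list"
  define n where "n = length w"
  define G where "G = (\<lambda>i j. p (take i w) * q (take j (drop i w)) * r (drop (i+j) w))"
  have "ncmul (ncmul p q) r w = (\<Sum>k\<le>n. \<Sum>i\<le>k. G i (k - i))"
    unfolding ncmul_def n_def G_def
    by (auto simp: sum_distrib_right min_def take_drop intro!: sum.cong)
  also have "\<dots> = (\<Sum>(i,j)\<in>{(i,j). i+j \<le> n}. G i j)"
    by (rule sum.triangle_reindex_eq[symmetric])
  also have "{(i,j). i+j \<le> n} = Sigma {..n} (\<lambda>i. {..n-i})" by auto
  also have "(\<Sum>(i,j)\<in>Sigma {..n} (\<lambda>i. {..n-i}). G i j) = (\<Sum>i\<le>n. \<Sum>j\<le>n-i. G i j)"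
    by (rule sum.Sigma[symmetric]) auto
  also have "\<dots> = ncmul p (ncmul q r) w"
    unfolding ncmul_def n_def G_def
    by (auto simp: sum_distrib_left mult.assoc add.commute intro!: sum.cong)
  finally show "ncmul (ncmul p q) r w = ncmul p (ncmul q r) w" .
qed

lemma ncmul_add_left: "ncmul (p + q) r = ncmul p r + ncmul q r"
  by (auto simp: ncmul_def fun_eq_iff algebra_simps sum.distrib)

lemma ncmul_add_right: "ncmul r (p + q) = ncmul r p + ncmul r q"
  by (auto simp: ncmul_def fun_eq_iff algebra_simps sum.distrib)

lemma ncmul_diff_left: "ncmul (p - q) r = ncmul p r - ncmul q r"
  by (auto simp: ncmul_def fun_eq_iff algebra_simps sum_subtractf)

lemma ncmul_diff_right: "ncmul r (p - q) = ncmul r p - ncmul r q"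
  by (auto simp: ncmul_def fun_eq_iff algebra_simps sum_subtractf)

lemma ncmul_smul_left: "ncmul (smul c p) r = smul c (ncmul p r)"
  by (auto simp: ncmul_def smul_def fun_eq_iff sum_distrib_left mult.assoc)

lemma ncmul_smul_right: "ncmul r (smul c p) = smul c (ncmul r p)"
  by (auto simp: ncmul_def smul_def fun_eq_iff sum_distrib_left algebra_simps)

lemma smul_diff: "smul c (p - q) = smul c p - smul c q"
  by (auto simp: smul_def fun_eq_iff algebra_simps)

lemma smul_zero [simp]: "smul c 0 = 0"
  by (auto simp: smul_def fun_eq_iff)

lemma smul_add: "smul c (p + q) = smul c p + smul c q"
  by (auto simp: smul_def fun_eq_iff algebra_simps)

lemma smul_two: "smul 2 p = p + p"
  by (auto simp: smul_def fun_eq_iff)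

lemma bracket_add_left: "bracket (p + q) r = bracket p r + bracket q r"
  by (simp add: bracket_def ncmul_add_left ncmul_add_right)

lemma bracket_add_right: "bracket r (p + q) = bracket r p + bracket r q"
  by (simp add: bracket_def ncmul_add_left ncmul_add_right)

lemma bracket_zero_left [simp]: "bracket 0 r = 0"
  by (simp add: bracket_add_left[of 0 0, simplified])

lemma bracket_zero_right [simp]: "bracket r 0 = 0"
  by (simp add: bracket_add_right[of _ 0 0, simplified])

lemma bracket_self [simp]: "bracket p p = 0"
  by (simp add: bracket_def)

lemma bracket_smul_left: "bracket (smul c p) q = smul c (bracket p q)"
  by (simp add: bracket_def ncmul_smul_left ncmul_smul_right smul_diff)

lemma bracket_smul_right: "bracket p (smul c q) = smul c (bracket p q)"
  by (simp add: bracket_def ncmul_smul_left ncmul_smul_right smul_diff)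

lemma bracket_sum_left: "bracket (\<Sum>i\<in>A. f i) r = (\<Sum>i\<in>A. bracket (f i) r)"
  using sum_comp_morphism[of "\<lambda>p. bracket p r" f A] by (simp add: bracket_add_left o_def)

lemma bracket_sum_right: "bracket r (\<Sum>i\<in>A. f i) = (\<Sum>i\<in>A. bracket r (f i))"
  using sum_comp_morphism[of "bracket r" f A] by (simp add: bracket_add_right o_def)

lemma bracket_jacobi: "bracket (bracket a c) b + bracket a (bracket b c) = bracket (bracket a b) c"
  by (simp add: bracket_def ncmul_diff_left ncmul_diff_right ncmul_assoc algebra_simps)

lemma free_lie_sum: "(\<And>i. i \<in> A \<Longrightarrow> f i \<in> free_lie g) \<Longrightarrow> sum f A \<in> free_lie g"
  by (induction A rule: infinite_finite_induct) (simp_all add: free_lie.zero free_lie.add)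

lemma homog_zero: "homog m 0"
  by (simp add: homog_def)

lemma homog_sum: "(\<And>i. i \<in> A \<Longrightarrow> homog m (f i)) \<Longrightarrow> homog m (sum f A)"
  by (induction A rule: infinite_finite_induct) (auto simp: homog_def)

lemma homog_smul: "homog m p \<Longrightarrow> homog m (smul c p)"
  by (simp add: homog_def smul_def)

lemma homog_ncmul: "homog m p \<Longrightarrow> homog n q \<Longrightarrow> homog (m + n) (ncmul p q)"
  unfolding homog_def ncmul_def
proof (intro allI impI sum.neutral ballI)
  fix w :: "gen list" and k
  assume p: "\<forall>w. length w \<noteq> m \<longrightarrow> p w = 0" and q: "\<forall>w. length w \<noteq> n \<longrightarrow> q w = 0"
    and "length w \<noteq> m + n" "k \<in> {..length w}"
  then have "length (take k w) \<noteq> m \<or> length (drop k w) \<noteq> n" by auto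
  then show "p (take k w) * q (drop k w) = 0" using p q by auto
qed

lemma homog_bracket:
  assumes "homog m p" "homog n q"
  shows "homog (m + n) (bracket p q)"
proof -
  have "homog (m + n) (ncmul p q)" "homog (m + n) (ncmul q p)"
    using homog_ncmul[OF assms] homog_ncmul[OF assms(2,1)] by (simp_all add: add.commute)
  then show ?thesis
    by (simp add: bracket_def homog_def)
qed

lemma homog_gen_el: "homog 1 (gen_el x)"
  by (simp add: homog_def gen_el_def)

lemma theta_basis:
  assumes "i \<in> {1..g}" "k \<in> {1..g}"
  shows "theta g (a_el i) (a_el k) = 0"
    and "theta g (b_el i) (b_el k) = 0"
    and "theta g (a_el i) (b_el k) = (if i = k then 1 else 0)"
    and "theta g (b_el i) (a_el k) = (if i = k then -1 else 0)"
  using assms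
  by (auto simp: theta_def a_el_def b_el_def gen_el_def if_distrib[of "\<lambda>x. x * _"]
      sum_negf cong: if_cong)

definition omega_on :: "nat set \<Rightarrow> ncpoly" where
  "omega_on I = (\<Sum>i\<in>I. bracket (a_el i) (b_el i))"

lemma omega_on_in_free_lie: "I \<subseteq> {1..g} \<Longrightarrow> omega_on I \<in> free_lie g"
  unfolding omega_on_def a_el_def b_el_def
  by (intro free_lie_sum free_lie.brk free_lie.gen) auto

lemma homog_omega_on: "homog 2 (omega_on I)"
  unfolding omega_on_def a_el_def b_el_def
  using homog_bracket[OF homog_gen_el homog_gen_el] by (intro homog_sum) (simp add: numeral_2_eq_2)

lemma phi_gen_symplectic_pairs:
  assumes "i \<in> {1..g}" "j \<in> {1..g}" "k \<in> {1..g}"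
  shows "phi_gen g (a_el i) (b_el i) (a_el j) (b_el j) (gen_el (k, e)) =
    (if i = k then bracket (gen_el (k, e)) (bracket (a_el j) (b_el j)) else 0) +
    (if j = k then bracket (gen_el (k, e)) (bracket (a_el i) (b_el i)) else 0)"
proof (cases e)
  case True
  then show ?thesis
    using theta_basis[OF assms(1,3)] theta_basis[OF assms(2,3)]
    by (simp add: phi_gen_def b_el_def[symmetric] smul_def fun_eq_iff)
next
  case False
  then show ?thesis
    using theta_basis[OF assms(1,3)] theta_basis[OF assms(2,3)]
    by (simp add: phi_gen_def a_el_def[symmetric] smul_def fun_eq_iff)
qed

lemma sum_sum_delta:
  fixes X Y :: "nat \<Rightarrow> nat \<Rightarrow> 'a::comm_monoid_add"
  assumes "finite I"
  shows "(\<Sum>i\<in>I. \<Sum>j\<in>I. (if i = k then X i j else 0) + (if j = k then Y i j else 0))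
       = (if k \<in> I then (\<Sum>j\<in>I. X k j) + (\<Sum>i\<in>I. Y i k) else 0)"
proof -
  have "(\<Sum>j\<in>I. if i = k then X i j else 0) = (if i = k then sum (X k) I else 0)" for i
    by simp
  then show ?thesis
    using assms by (simp add: sum.distrib)
qed

lemma phi_thetaI_sq_gen_el:
  assumes I: "I \<subseteq> {1..g}" and k: "k \<in> {1..g}"
  shows "phi_thetaI_sq g I (gen_el (k, e)) =
    (if k \<in> I then smul 2 (bracket (gen_el (k, e)) (omega_on I)) else 0)"
proof -
  have "finite I" using I finite_subset by blast
  have "phi_thetaI_sq g I (gen_el (k, e)) = (\<Sum>i\<in>I. \<Sum>j\<in>I.
      (if i = k then bracket (gen_el (k, e)) (bracket (a_el j) (b_el j)) else 0) +
      (if j = k then bracket (gen_el (k, e)) (bracket (a_el i) (b_el i)) else 0))"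
    unfolding phi_thetaI_sq_def using I k
    by (intro sum.cong refl phi_gen_symplectic_pairs) auto
  also have "\<dots> = (if k \<in> I then smul 2 (bracket (gen_el (k, e)) (omega_on I)) else 0)"
    by (simp only: sum_sum_delta[OF \<open>finite I\<close>] omega_on_def bracket_sum_right smul_two)
  finally show ?thesis .
qed

lemma derivation_obstruction_phi_thetaI_sq:
  assumes I: "I \<subseteq> {1..g}"
  shows "(\<Sum>k\<in>{1..g}. bracket (phi_thetaI_sq g I (a_el k)) (b_el k)
                   + bracket (a_el k) (phi_thetaI_sq g I (b_el k))) = 0"
proof -
  let ?\<omega> = "omega_on I"
  have "(\<Sum>k\<in>{1..g}. bracket (phi_thetaI_sq g I (a_el k)) (b_el k)
                   + bracket (a_el k) (phi_thetaI_sq g I (b_el k)))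
      = (\<Sum>k\<in>{1..g}. if k \<in> I then smul 2 (bracket (bracket (a_el k) (b_el k)) ?\<omega>) else 0)"
    using phi_thetaI_sq_gen_el[OF I]
    by (intro sum.cong refl)
       (simp add: a_el_def b_el_def bracket_smul_left bracket_smul_right bracket_jacobi
         flip: smul_add)
  also have "\<dots> = smul 2 (\<Sum>k\<in>I. bracket (bracket (a_el k) (b_el k)) ?\<omega>)"
    using I by (simp add: sum.If_cases Int_absorb1 smul_two sum_distrib_left)
  also have "\<dots> = smul 2 (bracket ?\<omega> ?\<omega>)"
    by (simp only: bracket_sum_left omega_on_def)
  finally show ?thesis by simp
qed

theorem mainTheorem5:
  fixes g :: nat and I :: "nat set"
  assumes "I \<subseteq> {1..g}"
  shows "in_Der g 2 (phi_thetaI_sq g I)"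
proof -
  have "phi_thetaI_sq g I (gen_el (k, e)) \<in> free_lie g \<and> homog 3 (phi_thetaI_sq g I (gen_el (k, e)))"
    if "k \<in> {1..g}" for k e
  proof -
    have "homog 3 (bracket (gen_el (k, e)) (omega_on I))"
      using homog_bracket[OF homog_gen_el homog_omega_on] by (simp add: numeral_3_eq_3)
    then show ?thesis
      using that assms
      by (simp add: phi_thetaI_sq_gen_el free_lie.zero homog_zero homog_smul
          free_lie.smul free_lie.brk free_lie.gen omega_on_in_free_lie)
  qed
  then show ?thesis
    unfolding in_Der_def a_el_def b_el_def
    using derivation_obstruction_phi_thetaI_sq[OF assms, unfolded a_el_def b_el_def]
    by (simp add: lie_ideal.zero)
qed

end
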